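(* For every integer $q\ge2$, the formal codegrees $(\mathfrak{c}_s)$ of the interpolated fusion ring $\mathcal{R}_q$ satisfy $2\sum_s\frac{1}{\mathfrak{c}_s^2}\le1+\frac{1}{\mathfrak{c}_{C_0}}$, where $C_0$ is the first column of the table (so $\mathfrak{c}_{C_0}=\mathrm{FPdim}(\mathcal{R}_q)$).
   Context: $\zeta_n=\exp(2\pi i/n)$. For integer $q\ge2$, $\mathcal{R}_q$ is the commutative fusion ring whose basis is the set of rows of the formal table $T_q=(\lambda_{x,s})$ below, with eigentable $T_q$ and structure constants $N_{x,y}^z=\sum_s\lambda_{x,s}\lambda_{y,s}\overline{\lambda_{z,s}}/\mathfrak{c}_s$, where the formal codegrees are $\mathfrak{c}_s=\sum_x|\lambda_{x,s}|^2$. Table $T_q$ (rows $x_{d,c}$; entries listed in the column order given): Case $q$ even. Columns: $C_0$; $C_1$; $A_k$ ($1\le k\le\frac{q-2}{2}$); $B_k$ ($1\le k\le\frac q2$). Rows: $x_{1,1}$: $1,1,1,1$. $x_{q-1,c}$ ($1\le c\le \frac q2$): $q-1,\,-1,\,0,\,-\zeta_{q+1}^{kc}-\zeta_{q+1}^{-kc}$. $x_{q,1}$: $q,0,1,-1$. $x_{q+1,c}$ ($1\le c\le\frac{q-2}{2}$): $q+1,\,1,\,\zeta_{q-1}^{kc}+\zeta_{q-1}^{-kc},\,0$. Case $q\equiv-1\pmod 4$. Columns: $C_0$; $D_k$ ($k\in\{1,2\}$); $A_k$ ($1\le k\le\frac{q-3}{4}$); $B_k$ ($1\le k\le\frac{q-3}{4}$);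 $E$ (with $k=\frac{q+1}{4}$). Rows: $x_{1,1}$: all $1$. $x_{\frac{q-1}{2},c}$ ($c\in\{1,2\}$): $\frac{q-1}2,\ \frac{-1+i(-1)^{k+c}\sqrt q}{2},\ 0,\ (-1)^{k+1},\ (-1)^{k+1}$. $x_{q-1,c}$ ($1\le c\le\frac{q-3}4$): $q-1,\,-1,\,0,\,-\zeta_{q+1}^{2kc}-\zeta_{q+1}^{-2kc},\,-2(-1)^c$. $x_{q,1}$: $q,0,1,-1,-1$. $x_{q+1,c}$ ($1\le c\le\frac{q-3}4$): $q+1,\,1,\,\zeta_{q-1}^{2kc}+\zeta_{q-1}^{-2kc},\,0,\,0$. Case $q\equiv1\pmod4$. Columns: $C_0$; $D_k$ ($k\in\{1,2\}$); $A_k$ ($1\le k\le\frac{q-5}4$); $E$ (with $k=\frac{q-1}4$); $B_k$ ($1\le k\le\frac{q-1}4$). Rows: $x_{1,1}$: all $1$. $x_{\frac{q+1}2,c}$ ($c\in\{1,2\}$): $\frac{q+1}2,\ \frac{1+(-1)^{k+c}\sqrt q}{2},\ (-1)^k,\ (-1)^k,\ 0$. $x_{q-1,c}$ ($1\le c\le\frac{q-1}4$): $q-1,\,-1,\,0,\,0,\,-\zeta_{q+1}^{2kc}-\zeta_{q+1}^{-2kc}$. $x_{q,1}$: $q,0,1,1,-1$. $x_{q+1,c}$ ($1\le c\le\frac{q-5}4$): $q+1,\,1,\,\zeta_{q-1}^{2kc}+\zeta_{q-1}^{-2kc},\,2(-1)^c,\,0$. *)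

theory Defs
  imports Complex_Main
begin

text \<open>Rows: X1 = x_{1,1}; Xh c = x_{(q-+1)/2,c}; Xm c = x_{q-1,c}; Xq = x_{q,1}; Xp c = x_{q+1,c}.  Entries outside the index sets are junk (0) and never used.\<close>

datatype frow = X1 | Xh nat | Xm nat | Xq | Xp nat
datatype fcol = C0 | C1 | D nat | A nat | B nat | E

definition zeta :: "nat \<Rightarrow> int \<Rightarrow> complex" where
  "zeta n m = exp (2 * pi * \<i> * of_int m / of_nat n)"

definition frows :: "nat \<Rightarrow> frow set" where
  "frows q =
    (if even q then {X1} \<union> Xm ` {1..q div 2} \<union> {Xq} \<union> Xp ` {1..(q-2) div 2}
     else if q mod 4 = 3 then
       {X1} \<union> Xh ` {1,2} \<union> Xm ` {1..(q-3) div 4} \<union> {Xq} \<union> Xp ` {1..(q-3) div 4}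
     else
       {X1} \<union> Xh ` {1,2} \<union> Xm ` {1..(q-1) div 4} \<union> {Xq} \<union> Xp ` {1..(q-5) div 4})"

definition fcols :: "nat \<Rightarrow> fcol set" where
  "fcols q =
    (if even q then {C0, C1} \<union> A ` {1..(q-2) div 2} \<union> B ` {1..q div 2}
     else if q mod 4 = 3 then
       {C0} \<union> D ` {1,2} \<union> A ` {1..(q-3) div 4} \<union> B ` {1..(q-3) div 4} \<union> {E}
     else
       {C0} \<union> D ` {1,2} \<union> A ` {1..(q-5) div 4} \<union> {E} \<union> B ` {1..(q-1) div 4})"

definition ftable :: "nat \<Rightarrow> frow \<Rightarrow> fcol \<Rightarrow> complex" where
  "ftable q x s =
    (let sq = complex_of_real (sqrt (real q)) in
    (if even q then
      (case x of
         X1 \<Rightarrow> 1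
       | Xm c \<Rightarrow> (case s of C0 \<Rightarrow> of_nat q - 1 | C1 \<Rightarrow> -1 | A k \<Rightarrow> 0
                  | B k \<Rightarrow> - zeta (q+1) (int (k*c)) - zeta (q+1) (- int (k*c)) | _ \<Rightarrow> 0)
       | Xq \<Rightarrow> (case s of C0 \<Rightarrow> of_nat q | C1 \<Rightarrow> 0 | A k \<Rightarrow> 1 | B k \<Rightarrow> -1 | _ \<Rightarrow> 0)
       | Xp c \<Rightarrow> (case s of C0 \<Rightarrow> of_nat q + 1 | C1 \<Rightarrow> 1
                  | A k \<Rightarrow> zeta (q-1) (int (k*c)) + zeta (q-1) (- int (k*c)) | B k \<Rightarrow> 0 | _ \<Rightarrow> 0)
       | _ \<Rightarrow> 0)
     else if q mod 4 = 3 then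
      (case x of
         X1 \<Rightarrow> 1
       | Xh c \<Rightarrow> (case s of C0 \<Rightarrow> of_nat ((q-1) div 2)
                  | D k \<Rightarrow> (-1 + \<i> * (-1)^(k+c) * sq) / 2
                  | A k \<Rightarrow> 0
                  | B k \<Rightarrow> (-1)^(k+1)
                  | E \<Rightarrow> (-1)^((q+1) div 4 + 1) | _ \<Rightarrow> 0)
       | Xm c \<Rightarrow> (case s of C0 \<Rightarrow> of_nat q - 1 | D k \<Rightarrow> -1 | A k \<Rightarrow> 0
                  | B k \<Rightarrow> - zeta (q+1) (int (2*k*c)) - zeta (q+1) (- int (2*k*c))
                  | E \<Rightarrow> - 2 * (-1)^c | _ \<Rightarrow> 0)
       | Xq \<Rightarrow> (case s of C0 \<Rightarrow> of_nat q | D k \<Rightarrow> 0 | A k \<Rightarrow> 1 | B k \<Rightarrow> -1 | E \<Rightarrow> -1 | _ \<Rightarrow> 0)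
       | Xp c \<Rightarrow> (case s of C0 \<Rightarrow> of_nat q + 1 | D k \<Rightarrow> 1
                  | A k \<Rightarrow> zeta (q-1) (int (2*k*c)) + zeta (q-1) (- int (2*k*c))
                  | B k \<Rightarrow> 0 | E \<Rightarrow> 0 | _ \<Rightarrow> 0))
     else
      (case x of
         X1 \<Rightarrow> 1
       | Xh c \<Rightarrow> (case s of C0 \<Rightarrow> of_nat ((q+1) div 2)
                  | D k \<Rightarrow> (1 + (-1)^(k+c) * sq) / 2
                  | A k \<Rightarrow> (-1)^k
                  | E \<Rightarrow> (-1)^((q-1) div 4)
                  | B k \<Rightarrow> 0 | _ \<Rightarrow> 0)
       | Xm c \<Rightarrow> (case s of C0 \<Rightarrow> of_nat q - 1 | D k \<Rightarrow> -1 | A k \<Rightarrow> 0 | E \<Rightarrow> 0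
                  | B k \<Rightarrow> - zeta (q+1) (int (2*k*c)) - zeta (q+1) (- int (2*k*c)) | _ \<Rightarrow> 0)
       | Xq \<Rightarrow> (case s of C0 \<Rightarrow> of_nat q | D k \<Rightarrow> 0 | A k \<Rightarrow> 1 | E \<Rightarrow> 1 | B k \<Rightarrow> -1 | _ \<Rightarrow> 0)
       | Xp c \<Rightarrow> (case s of C0 \<Rightarrow> of_nat q + 1 | D k \<Rightarrow> 1
                  | A k \<Rightarrow> zeta (q-1) (int (2*k*c)) + zeta (q-1) (- int (2*k*c))
                  | E \<Rightarrow> 2 * (-1)^c | B k \<Rightarrow> 0 | _ \<Rightarrow> 0))))"

definition fcodeg :: "nat \<Rightarrow> fcol \<Rightarrow> real" where
  "fcodeg q s = (\<Sum>x\<in>frows q. (cmod (ftable q x s))^2)"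

end

(* The columns other than C0 have explicitly computable codegrees.  Apart from the entries
   0, +-1, +-2 and the quadratic irrationalities in the rows x_((q+-1)/2,c), the table
   consists of the real numbers zeta^j + zeta^-j, and
   |zeta^j + zeta^-j|^2 = 2 + zeta^2j + zeta^-2j.  Summed over a block of rows this is 2m
   plus half of the sum of the nontrivial powers of the root of unity z = zeta^2b, i.e.
   2m - 1 when z^(2m+1) = 1 and 2m - 2 when z^(m+1) = 1.  The resulting codegrees are q and
   q +- 1 for even q, and q, q +- 1, (q +- 1)/2 for odd q, so these columns contribute at
   most 1/2 to the sum of inverse squares.  The codegree c of C0 is at least q^2 >= 4,
   hence 2/c^2 <= 1/c absorbs the contribution of C0 itself. *)

theory Submission
  imports Defs "HOL-Analysis.Complex_Transcendental"
begin

section \<open>Sums of powers of a root of unity\<close>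

lemma sum_powers_root_of_unity:
  fixes z :: "'a::field"
  assumes "0 < n" "z ^ n = 1" "z \<noteq> 1"
  shows "(\<Sum>c=1..<n. z ^ c) = -1"
proof -
  have "(\<Sum>c<n. z ^ c) = 0" using assms by (simp add: sum_gp_strict)
  then show ?thesis using assms(1) by (simp add: sum.atLeast_Suc_lessThan lessThan_atLeast0 add_eq_0_iff)
qed

lemma inverse_power_root_of_unity:
  fixes z :: "'a::field"
  assumes "z ^ n = 1" "c \<le> n"
  shows "inverse (z ^ c) = z ^ (n - c)"
proof -
  have "z ^ (n - c) * z ^ c = 1" using assms by (simp flip: power_add)
  then show ?thesis by (metis inverse_unique mult.commute)
qed

lemma sum_power_inverse_odd:
  fixes z :: "'a::field"
  assumes "z ^ (2*m+1) = 1" "z \<noteq> 1"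
  shows "(\<Sum>c=1..m. z ^ c + inverse (z ^ c)) = -1"
proof -
  have "(\<Sum>c=1..m. inverse (z ^ c)) = (\<Sum>c=1..m. z ^ (2*m+1-c))"
    using assms(1) by (intro sum.cong) (auto intro: inverse_power_root_of_unity)
  also have "\<dots> = (\<Sum>c=m+1..<2*m+1. z ^ c)"
    by (rule sum.reindex_bij_witness[where i="\<lambda>c. 2*m+1-c" and j="\<lambda>c. 2*m+1-c"]) auto
  finally have "(\<Sum>c=1..m. z ^ c + inverse (z ^ c)) = (\<Sum>c=1..<m+1. z ^ c) + (\<Sum>c=m+1..<2*m+1. z ^ c)"
    by (simp add: sum.distrib atLeastLessThanSuc_atLeastAtMost)
  also have "\<dots> = (\<Sum>c=1..<2*m+1. z ^ c)" by (rule sum.atLeastLessThan_concat) auto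
  also have "\<dots> = -1" using assms by (intro sum_powers_root_of_unity) auto
  finally show ?thesis .
qed

lemma sum_power_inverse_even:
  fixes z :: "'a::field"
  assumes "z ^ (m+1) = 1" "z \<noteq> 1"
  shows "(\<Sum>c=1..m. z ^ c + inverse (z ^ c)) = -2"
proof -
  have "(\<Sum>c=1..m. inverse (z ^ c)) = (\<Sum>c=1..m. z ^ (m+1-c))"
    using assms(1) by (intro sum.cong) (auto intro: inverse_power_root_of_unity)
  also have "\<dots> = (\<Sum>c=1..m. z ^ c)"
    by (rule sum.reindex_bij_witness[where i="\<lambda>c. m+1-c" and j="\<lambda>c. m+1-c"]) auto
  finally have "(\<Sum>c=1..m. z ^ c + inverse (z ^ c)) = 2 * (\<Sum>c=1..<m+1. z ^ c)"
    by (simp add: sum.distrib atLeastLessThanSuc_atLeastAtMost)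
  also have "(\<Sum>c=1..<m+1. z ^ c) = -1"
    using assms by (intro sum_powers_root_of_unity) auto
  finally show ?thesis by simp
qed

section \<open>The roots of unity \<open>zeta\<close>\<close>

lemma zeta_power: "zeta N a ^ n = zeta N (a * int n)"
  unfolding zeta_def by (simp add: exp_of_nat_mult[symmetric] algebra_simps)

lemma zeta_uminus: "zeta N (- a) = inverse (zeta N a)"
  unfolding zeta_def by (simp add: exp_minus[symmetric])

lemma cnj_zeta: "cnj (zeta N a) = zeta N (- a)"
  unfolding zeta_def by (simp add: exp_cnj)

lemma zeta_eq_1_iff:
  assumes "0 < N"
  shows "zeta N a = 1 \<longleftrightarrow> int N dvd a"
proof
  assume "zeta N a = 1"
  then obtain n :: int where "2 * pi * of_int a / real N = of_int (2 * n) * pi"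
    unfolding zeta_def exp_eq_1 by auto
  then have "a = int N * n"
    using assms by (simp add: field_simps) (metis of_int_eq_iff of_int_mult of_int_of_nat_eq)
  then show "int N dvd a" by simp
next
  assume "int N dvd a"
  then obtain t where "a = int N * t" by blast
  then have "zeta N a = exp ((2 * of_int t * pi) * \<i>)"
    unfolding zeta_def using assms by (simp add: field_simps)
  also have "\<dots> = 1" by (rule exp_integer_2pi) simp
  finally show "zeta N a = 1" .
qed

lemma zeta_power_eq_1:
  assumes "0 < N" "N dvd b * n"
  shows "zeta N (int b) ^ n = 1"
  using assms by (simp add: zeta_power zeta_eq_1_iff flip: of_nat_mult)

lemma norm_zeta_add_zeta_uminus_sq:
  "complex_of_real ((cmod (zeta N a + zeta N (- a)))\<^sup>2)
     = 2 + zeta N (2 * a) + inverse (zeta N (2 * a))"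
proof -
  define w where "w = zeta N a"
  have "w \<noteq> 0" unfolding w_def zeta_def by simp
  have "cnj w = inverse w" unfolding w_def cnj_zeta zeta_uminus ..
  then have "cnj (w + inverse w) = w + inverse w" by (simp add: complex_cnj_inverse)
  then have "complex_of_real ((cmod (w + inverse w))\<^sup>2) = (w + inverse w)\<^sup>2"
    unfolding complex_norm_square by (simp only: power2_eq_square)
  also have "\<dots> = 2 + w\<^sup>2 + inverse (w\<^sup>2)"
    using \<open>w \<noteq> 0\<close> by (simp add: power2_eq_square field_simps)
  finally show ?thesis
    unfolding zeta_uminus w_def zeta_power by (simp add: mult.commute)
qed

lemma of_real_sum_norm_zeta_pairs_sq:
  fixes N b m :: nat
  shows "complex_of_real (\<Sum>c=1..m. (cmod (zeta N (int (b*c)) + zeta N (- int (b*c))))\<^sup>2)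
     = 2 * of_nat m + (\<Sum>c=1..m. zeta N (int (2*b)) ^ c + inverse (zeta N (int (2*b)) ^ c))"
proof -
  have "complex_of_real ((cmod (zeta N (int (b*c)) + zeta N (- int (b*c))))\<^sup>2)
      = 2 + (zeta N (int (2*b)) ^ c + inverse (zeta N (int (2*b)) ^ c))" for c
    unfolding norm_zeta_add_zeta_uminus_sq zeta_power by (simp add: algebra_simps)
  then show ?thesis by (simp add: sum.distrib)
qed

lemma sum_norm_zeta_pairs_sq_odd:
  fixes N b m :: nat
  assumes "0 < N" "\<not> N dvd 2*b" "N dvd 2*b*(2*m+1)"
  shows "(\<Sum>c=1..m. (cmod (zeta N (int (b*c)) + zeta N (- int (b*c))))\<^sup>2) = 2 * real m - 1"
proof -
  have root: "zeta N (int (2*b)) ^ (2*m+1) = 1" using assms by (intro zeta_power_eq_1)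
  have nontrivial: "zeta N (int (2*b)) \<noteq> 1"
    unfolding zeta_eq_1_iff[OF assms(1)] of_nat_dvd_iff using assms(2) .
  have "complex_of_real (\<Sum>c=1..m. (cmod (zeta N (int (b*c)) + zeta N (- int (b*c))))\<^sup>2)
      = complex_of_real (2 * real m - 1)"
    unfolding of_real_sum_norm_zeta_pairs_sq sum_power_inverse_odd[OF root nontrivial] by simp
  then show ?thesis by (simp only: of_real_eq_iff)
qed

lemma sum_norm_zeta_pairs_sq_even:
  fixes N b m :: nat
  assumes "0 < N" "\<not> N dvd 2*b" "N dvd 2*b*(m+1)"
  shows "(\<Sum>c=1..m. (cmod (zeta N (int (b*c)) + zeta N (- int (b*c))))\<^sup>2) = 2 * real m - 2"
proof -
  have root: "zeta N (int (2*b)) ^ (m+1) = 1" using assms by (intro zeta_power_eq_1)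
  have nontrivial: "zeta N (int (2*b)) \<noteq> 1"
    unfolding zeta_eq_1_iff[OF assms(1)] of_nat_dvd_iff using assms(2) .
  have "complex_of_real (\<Sum>c=1..m. (cmod (zeta N (int (b*c)) + zeta N (- int (b*c))))\<^sup>2)
      = complex_of_real (2 * real m - 2)"
    unfolding of_real_sum_norm_zeta_pairs_sq sum_power_inverse_even[OF root nontrivial] by simp
  then show ?thesis by (simp only: of_real_eq_iff)
qed

lemma sum_image_Un_image:
  assumes "inj f" "inj g" "range f \<inter> range g = {}" "finite I" "finite J"
  shows "sum h (f ` I \<union> g ` J) = (\<Sum>i\<in>I. h (f i)) + (\<Sum>j\<in>J. h (g j))"
proof -
  have "sum h (f ` I \<union> g ` J) = sum h (f ` I) + sum h (g ` J)"
    using assms by (intro sum.union_disjoint) auto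
  then show ?thesis using assms(1,2) by (simp add: sum.reindex inj_on_subset)
qed

lemma sum_Xm_Un_Xp:
  "finite M \<Longrightarrow> finite P \<Longrightarrow> sum f (Xm ` M \<union> Xp ` P) = (\<Sum>c\<in>M. f (Xm c)) + (\<Sum>c\<in>P. f (Xp c))"
  by (rule sum_image_Un_image) (auto simp: inj_def)

lemma sum_frows_even:
  assumes "q = 2*t" "1 \<le> t"
  shows "sum f (frows q) = f X1 + f Xq + (\<Sum>c=1..t. f (Xm c)) + (\<Sum>c=1..t-1. f (Xp c))"
proof -
  have "frows q = insert X1 (insert Xq (Xm ` {1..t} \<union> Xp ` {1..t-1}))"
    using assms by (auto simp: frows_def)
  then show ?thesis by (simp add: sum_Xm_Un_Xp image_iff add.assoc)
qed

lemma sum_frows_3mod4: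
  assumes "q = 4*u+3"
  shows "sum f (frows q) = f X1 + f Xq + f (Xh 1) + f (Xh 2)
    + (\<Sum>c=1..u. f (Xm c)) + (\<Sum>c=1..u. f (Xp c))"
proof -
  have "frows q = insert X1 (insert Xq (insert (Xh 1) (insert (Xh 2) (Xm ` {1..u} \<union> Xp ` {1..u}))))"
    using assms by (simp add: frows_def insert_commute)
  then show ?thesis by (simp add: sum_Xm_Un_Xp image_iff add.assoc)
qed

lemma sum_frows_1mod4:
  assumes "q = 4*u+1" "1 \<le> u"
  shows "sum f (frows q) = f X1 + f Xq + f (Xh 1) + f (Xh 2)
    + (\<Sum>c=1..u. f (Xm c)) + (\<Sum>c=1..u-1. f (Xp c))"
proof -
  have "(q-5) div 4 = u - 1" using assms by simp
  then have "frows q = insert X1 (insert Xq (insert (Xh 1) (insert (Xh 2) (Xm ` {1..u} \<union> Xp ` {1..u-1}))))"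
    using assms by (simp add: frows_def insert_commute)
  then show ?thesis by (simp add: sum_Xm_Un_Xp image_iff add.assoc)
qed

lemma sum_A_Un_B:
  "finite I \<Longrightarrow> finite J \<Longrightarrow> sum f (A ` I \<union> B ` J) = (\<Sum>k\<in>I. f (A k)) + (\<Sum>k\<in>J. f (B k))"
  by (rule sum_image_Un_image) (auto simp: inj_def)

lemma sum_fcols_even:
  assumes "q = 2*t" "1 \<le> t"
  shows "sum f (fcols q - {C0}) = f C1 + (\<Sum>k=1..t-1. f (A k)) + (\<Sum>k=1..t. f (B k))"
proof -
  have "fcols q - {C0} = insert C1 (A ` {1..t-1} \<union> B ` {1..t})"
    using assms by (auto simp: fcols_def)
  then show ?thesis by (simp add: sum_A_Un_B image_iff add.assoc)
qed

lemma sum_fcols_3mod4: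
  assumes "q = 4*u+3"
  shows "sum f (fcols q - {C0}) = f E + f (D 1) + f (D 2) + (\<Sum>k=1..u. f (A k)) + (\<Sum>k=1..u. f (B k))"
proof -
  have "fcols q - {C0} = insert E (insert (D 1) (insert (D 2) (A ` {1..u} \<union> B ` {1..u})))"
    using assms by (auto simp: fcols_def)
  then show ?thesis by (simp add: sum_A_Un_B image_iff add.assoc)
qed

lemma sum_fcols_1mod4:
  assumes "q = 4*u+1" "1 \<le> u"
  shows "sum f (fcols q - {C0}) = f E + f (D 1) + f (D 2) + (\<Sum>k=1..u-1. f (A k)) + (\<Sum>k=1..u. f (B k))"
proof -
  have "fcols q - {C0} = insert E (insert (D 1) (insert (D 2) (A ` {1..u-1} \<union> B ` {1..u})))"
    using assms by (auto simp: fcols_def)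
  then show ?thesis by (simp add: sum_A_Un_B image_iff add.assoc)
qed

section \<open>Formal codegrees\<close>

lemma norm_uminus_diff: "norm (- a - b) = norm (a + b)"
  using norm_minus_cancel[of "a + b"] by (simp only: minus_add_distrib diff_conv_add_uminus)

lemma norm_sq_minus_one_plus_i_sqrt:
  assumes "0 \<le> x"
  shows "(cmod ((-1 + \<i> * (-1)^n * complex_of_real (sqrt x)) / 2))\<^sup>2 = (1 + x) / 4"
  using assms by (cases "even n") (simp_all add: cmod_power2 power_divide)

lemma norm_sq_one_plus_sqrt_pair:
  assumes "0 \<le> x"
  shows "(cmod ((1 + (-1)^n * complex_of_real (sqrt x)) / 2))\<^sup>2
       + (cmod ((1 + (-1)^(n+1) * complex_of_real (sqrt x)) / 2))\<^sup>2 = (1 + x) / 2"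
proof -
  have sq: "(cmod ((1 + (-1)^m * complex_of_real (sqrt x)) / 2))\<^sup>2 = ((1 + (-1)^m * sqrt x) / 2)\<^sup>2" for m
  proof -
    have "(1 + (-1)^m * complex_of_real (sqrt x)) / 2 = complex_of_real ((1 + (-1)^m * sqrt x) / 2)"
      by simp
    then show ?thesis by (simp only: norm_of_real power2_abs)
  qed
  have "((1 + sqrt x) / 2)\<^sup>2 + ((1 - sqrt x) / 2)\<^sup>2 = (1 + x) / 2"
    using assms by (simp add: power2_eq_square field_simps)
  then show ?thesis unfolding sq by (cases "even n") (simp_all add: add.commute)
qed

lemma fcodeg_C0_ge: "real q ^ 2 \<le> fcodeg q C0"
proof -
  have "Xq \<in> frows q" by (simp add: frows_def)
  moreover have "ftable q Xq C0 = of_nat q" by (simp add: ftable_def Let_def)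
  ultimately have "(cmod (ftable q Xq C0))\<^sup>2 \<le> fcodeg q C0"
    unfolding fcodeg_def by (intro member_le_sum) (auto simp: frows_def)
  then show ?thesis using \<open>ftable q Xq C0 = of_nat q\<close> by simp
qed

lemma fcodeg_even_C1:
  assumes "q = 2*t" "1 \<le> t"
  shows "fcodeg q C1 = real q"
proof -
  have "even q" using assms by simp
  then have "fcodeg q C1 = 1 + real t + real (t-1)"
    unfolding fcodeg_def sum_frows_even[OF assms] by (simp add: ftable_def)
  then show ?thesis using assms by (simp add: of_nat_diff)
qed

lemma fcodeg_even_A:
  assumes "q = 2*t" "1 \<le> t" "1 \<le> k" "k \<le> t - 1"
  shows "fcodeg q (A k) = real q - 1"
proof -
  have "even q" using assms by simp
  have "(\<Sum>c=1..t-1. (cmod (ftable q (Xp c) (A k)))\<^sup>2)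
      = (\<Sum>c=1..t-1. (cmod (zeta (q-1) (int (k*c)) + zeta (q-1) (- int (k*c))))\<^sup>2)"
    using \<open>even q\<close> by (simp add: ftable_def)
  also have "\<dots> = 2 * real (t-1) - 1"
  proof (rule sum_norm_zeta_pairs_sq_odd)
    have "2*(t-1)+1 = q-1" using assms by simp
    then show "q-1 dvd 2*k*(2*(t-1)+1)" by (simp only: dvd_triv_right)
    show "\<not> q-1 dvd 2*k" using assms by (intro nat_dvd_not_less) auto
  qed (use assms in simp)
  finally have "fcodeg q (A k) = 1 + 1 + 2 * real (t-1) - 1"
    using \<open>even q\<close> unfolding fcodeg_def sum_frows_even[OF assms(1,2)] by (simp add: ftable_def)
  then show ?thesis using assms by (simp add: of_nat_diff)
qed

lemma fcodeg_even_B: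
  assumes "q = 2*t" "1 \<le> t" "1 \<le> k" "k \<le> t"
  shows "fcodeg q (B k) = real q + 1"
proof -
  have "even q" using assms by simp
  have "(\<Sum>c=1..t. (cmod (ftable q (Xm c) (B k)))\<^sup>2)
      = (\<Sum>c=1..t. (cmod (zeta (q+1) (int (k*c)) + zeta (q+1) (- int (k*c))))\<^sup>2)"
    using \<open>even q\<close> by (simp add: ftable_def norm_uminus_diff)
  also have "\<dots> = 2 * real t - 1"
  proof (rule sum_norm_zeta_pairs_sq_odd)
    have "2*t+1 = q+1" using assms by simp
    then show "q+1 dvd 2*k*(2*t+1)" by (simp only: dvd_triv_right)
    show "\<not> q+1 dvd 2*k" using assms by (intro nat_dvd_not_less) auto
  qed simp
  finally have "fcodeg q (B k) = 1 + 1 + 2 * real t - 1"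
    using \<open>even q\<close> unfolding fcodeg_def sum_frows_even[OF assms(1,2)] by (simp add: ftable_def)
  then show ?thesis using assms by simp
qed

lemma fcodeg_3mod4_D:
  assumes "q = 4*u+3" "k \<in> {1,2}"
  shows "fcodeg q (D k) = real q"
proof -
  have "\<not> even q" "q mod 4 = 3" using assms by auto
  have "ftable q (Xh c) (D k) = (-1 + \<i> * (-1)^(k+c) * complex_of_real (sqrt (real q))) / 2" for c
    using \<open>\<not> even q\<close> \<open>q mod 4 = 3\<close> by (simp add: ftable_def)
  then have Xh: "(cmod (ftable q (Xh c) (D k)))\<^sup>2 = (1 + real q) / 4" for c
    by (simp only: norm_sq_minus_one_plus_i_sqrt[OF of_nat_0_le_iff])
  have "fcodeg q (D k) = 1 + (1 + real q) / 2 + real u + real u"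
    using \<open>\<not> even q\<close> \<open>q mod 4 = 3\<close>
    unfolding fcodeg_def sum_frows_3mod4[OF assms(1)] Xh by (simp add: ftable_def)
  then show ?thesis using assms(1) by simp
qed

lemma fcodeg_3mod4_A:
  assumes "q = 4*u+3" "1 \<le> k" "k \<le> u"
  shows "fcodeg q (A k) = (real q - 1) / 2"
proof -
  have "\<not> even q" "q mod 4 = 3" using assms by auto
  have "(\<Sum>c=1..u. (cmod (ftable q (Xp c) (A k)))\<^sup>2)
      = (\<Sum>c=1..u. (cmod (zeta (q-1) (int (2*k*c)) + zeta (q-1) (- int (2*k*c))))\<^sup>2)"
    using \<open>\<not> even q\<close> \<open>q mod 4 = 3\<close> by (simp add: ftable_def)
  also have "\<dots> = 2 * real u - 1"
  proof (rule sum_norm_zeta_pairs_sq_odd)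
    have "2*(2*k)*(2*u+1) = 2*k*(q-1)" using assms by simp
    then show "q-1 dvd 2*(2*k)*(2*u+1)" by (simp only: dvd_triv_right)
    show "\<not> q-1 dvd 2*(2*k)" using assms by (intro nat_dvd_not_less) auto
  qed (use assms in simp)
  finally have "fcodeg q (A k) = 1 + 1 + 2 * real u - 1"
    using \<open>\<not> even q\<close> \<open>q mod 4 = 3\<close>
    unfolding fcodeg_def sum_frows_3mod4[OF assms(1)] by (simp add: ftable_def)
  then show ?thesis using assms(1) by simp
qed

lemma fcodeg_3mod4_B:
  assumes "q = 4*u+3" "1 \<le> k" "k \<le> u"
  shows "fcodeg q (B k) = (real q + 1) / 2"
proof -
  have "\<not> even q" "q mod 4 = 3" using assms by auto
  have "(\<Sum>c=1..u. (cmod (ftable q (Xm c) (B k)))\<^sup>2)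
      = (\<Sum>c=1..u. (cmod (zeta (q+1) (int (2*k*c)) + zeta (q+1) (- int (2*k*c))))\<^sup>2)"
    using \<open>\<not> even q\<close> \<open>q mod 4 = 3\<close> by (simp add: ftable_def norm_uminus_diff)
  also have "\<dots> = 2 * real u - 2"
  proof (rule sum_norm_zeta_pairs_sq_even)
    have "2*(2*k)*(u+1) = k*(q+1)" using assms by (simp add: algebra_simps)
    then show "q+1 dvd 2*(2*k)*(u+1)" by (simp only: dvd_triv_right)
    show "\<not> q+1 dvd 2*(2*k)" using assms by (intro nat_dvd_not_less) auto
  qed simp
  finally have "fcodeg q (B k) = 1 + 1 + 1 + 1 + 2 * real u - 2"
    using \<open>\<not> even q\<close> \<open>q mod 4 = 3\<close>
    unfolding fcodeg_def sum_frows_3mod4[OF assms(1)] by (simp add: ftable_def norm_power)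
  then show ?thesis using assms(1) by simp
qed

lemma fcodeg_3mod4_E:
  assumes "q = 4*u+3"
  shows "fcodeg q E = real q + 1"
proof -
  have "\<not> even q" "q mod 4 = 3" using assms by auto
  then have "fcodeg q E = 1 + 1 + 1 + 1 + 4 * real u"
    unfolding fcodeg_def sum_frows_3mod4[OF assms(1)] by (simp add: ftable_def norm_power norm_mult)
  then show ?thesis using assms(1) by simp
qed

lemma fcodeg_1mod4_D:
  assumes "q = 4*u+1" "1 \<le> u" "k \<in> {1,2}"
  shows "fcodeg q (D k) = real q"
proof -
  have "\<not> even q" "q mod 4 = 1" using assms by auto
  then have "ftable q (Xh 1) (D k) = (1 + (-1)^(k+1) * complex_of_real (sqrt (real q))) / 2"
    "ftable q (Xh 2) (D k) = (1 + (-1)^(k+1+1) * complex_of_real (sqrt (real q))) / 2"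
    by (simp_all add: ftable_def)
  then have Xh: "(cmod (ftable q (Xh 1) (D k)))\<^sup>2 + (cmod (ftable q (Xh 2) (D k)))\<^sup>2 = (1 + real q) / 2"
    by (simp only: norm_sq_one_plus_sqrt_pair[OF of_nat_0_le_iff])
  have "fcodeg q (D k) = (cmod (ftable q X1 (D k)))\<^sup>2 + (cmod (ftable q Xq (D k)))\<^sup>2
      + ((cmod (ftable q (Xh 1) (D k)))\<^sup>2 + (cmod (ftable q (Xh 2) (D k)))\<^sup>2)
      + (\<Sum>c=1..u. (cmod (ftable q (Xm c) (D k)))\<^sup>2) + (\<Sum>c=1..u-1. (cmod (ftable q (Xp c) (D k)))\<^sup>2)"
    unfolding fcodeg_def sum_frows_1mod4[OF assms(1,2)] by (simp only: add.assoc)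
  also have "\<dots> = 1 + (1 + real q) / 2 + real u + real (u-1)"
    using \<open>\<not> even q\<close> \<open>q mod 4 = 1\<close> unfolding Xh by (simp add: ftable_def)
  finally show ?thesis using assms(1,2) by (simp add: of_nat_diff)
qed

lemma fcodeg_1mod4_A:
  assumes "q = 4*u+1" "1 \<le> k" "k \<le> u - 1"
  shows "fcodeg q (A k) = (real q - 1) / 2"
proof -
  have "1 \<le> u" using assms by simp
  have "\<not> even q" "q mod 4 = 1" using assms by auto
  have "(\<Sum>c=1..u-1. (cmod (ftable q (Xp c) (A k)))\<^sup>2)
      = (\<Sum>c=1..u-1. (cmod (zeta (q-1) (int (2*k*c)) + zeta (q-1) (- int (2*k*c))))\<^sup>2)"
    using \<open>\<not> even q\<close> \<open>q mod 4 = 1\<close> by (simp add: ftable_def)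
  also have "\<dots> = 2 * real (u-1) - 2"
  proof (rule sum_norm_zeta_pairs_sq_even)
    have "2*(2*k)*(u-1+1) = k*(q-1)" using assms \<open>1 \<le> u\<close> by (simp add: algebra_simps)
    then show "q-1 dvd 2*(2*k)*(u-1+1)" by (simp only: dvd_triv_right)
    show "\<not> q-1 dvd 2*(2*k)" using assms by (intro nat_dvd_not_less) auto
  qed (use assms in simp)
  finally have "fcodeg q (A k) = 1 + 1 + 1 + 1 + 2 * real (u-1) - 2"
    using \<open>\<not> even q\<close> \<open>q mod 4 = 1\<close>
    unfolding fcodeg_def sum_frows_1mod4[OF assms(1) \<open>1 \<le> u\<close>] by (simp add: ftable_def norm_power)
  then show ?thesis using assms(1) \<open>1 \<le> u\<close> by (simp add: of_nat_diff)
qed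

lemma fcodeg_1mod4_B:
  assumes "q = 4*u+1" "1 \<le> k" "k \<le> u"
  shows "fcodeg q (B k) = (real q + 1) / 2"
proof -
  have "1 \<le> u" using assms by simp
  have "\<not> even q" "q mod 4 = 1" using assms by auto
  have "(\<Sum>c=1..u. (cmod (ftable q (Xm c) (B k)))\<^sup>2)
      = (\<Sum>c=1..u. (cmod (zeta (q+1) (int (2*k*c)) + zeta (q+1) (- int (2*k*c))))\<^sup>2)"
    using \<open>\<not> even q\<close> \<open>q mod 4 = 1\<close> by (simp add: ftable_def norm_uminus_diff)
  also have "\<dots> = 2 * real u - 1"
  proof (rule sum_norm_zeta_pairs_sq_odd)
    have "2*(2*k)*(2*u+1) = 2*k*(q+1)" using assms by (simp add: algebra_simps)
    then show "q+1 dvd 2*(2*k)*(2*u+1)" by (simp only: dvd_triv_right)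
    show "\<not> q+1 dvd 2*(2*k)" using assms by (intro nat_dvd_not_less) auto
  qed simp
  finally have "fcodeg q (B k) = 1 + 1 + 2 * real u - 1"
    using \<open>\<not> even q\<close> \<open>q mod 4 = 1\<close>
    unfolding fcodeg_def sum_frows_1mod4[OF assms(1) \<open>1 \<le> u\<close>] by (simp add: ftable_def)
  then show ?thesis using assms(1) by simp
qed

lemma fcodeg_1mod4_E:
  assumes "q = 4*u+1" "1 \<le> u"
  shows "fcodeg q E = real q - 1"
proof -
  have "\<not> even q" "q mod 4 = 1" using assms by auto
  then have "fcodeg q E = 1 + 1 + 1 + 1 + 4 * real (u-1)"
    unfolding fcodeg_def sum_frows_1mod4[OF assms] by (simp add: ftable_def norm_power norm_mult)
  then show ?thesis using assms by (simp add: of_nat_diff)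
qed

section \<open>The columns other than \<open>C0\<close>\<close>

lemma inverse_sq_le_inverse_sq:
  fixes a x :: real
  assumes "0 < a" "a \<le> x"
  shows "1 / x\<^sup>2 \<le> 1 / a\<^sup>2"
  using assms by (intro divide_left_mono power_mono mult_pos_pos) auto

lemma ratio_sq_le_one_eighth:
  fixes x :: real
  assumes "0 \<le> x"
  shows "x / (2*x + 1)\<^sup>2 \<le> 1/8"
proof -
  have "8 * x \<le> (2*x + 1)\<^sup>2" using zero_le_power2[of "2*x - 1"] by (simp add: power2_eq_square algebra_simps)
  then show ?thesis using assms by (simp add: field_simps add_pos_nonneg)
qed

lemma ratio_sq_le_one_sixteenth:
  fixes x :: real
  assumes "0 \<le> x"
  shows "x / (2*x + 2)\<^sup>2 \<le> 1/16"
proof -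
  have "16 * x \<le> (2*x + 2)\<^sup>2" using zero_le_power2[of "x - 1"] by (simp add: power2_eq_square algebra_simps)
  then show ?thesis using assms by (simp add: field_simps add_pos_nonneg)
qed

lemma sum_inverse_fcodeg_sq_even_le:
  assumes "q = 2*t" "1 \<le> t"
  shows "(\<Sum>s\<in>fcols q - {C0}. 1 / (fcodeg q s)\<^sup>2) \<le> 1/2"
proof -
  have "(\<Sum>k=1..t-1. 1 / (fcodeg q (A k))\<^sup>2) = (\<Sum>k=1..t-1. 1 / (real q - 1)\<^sup>2)"
    by (intro sum.cong) (auto simp: fcodeg_even_A[OF assms])
  also have "\<dots> = (real t - 1) / (2 * (real t - 1) + 1)\<^sup>2"
    using assms by (simp add: of_nat_diff algebra_simps)
  finally have A: "(\<Sum>k=1..t-1. 1 / (fcodeg q (A k))\<^sup>2) \<le> 1/8"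
    using ratio_sq_le_one_eighth[of "real t - 1"] assms by simp
  have "(\<Sum>k=1..t. 1 / (fcodeg q (B k))\<^sup>2) = (\<Sum>k=1..t. 1 / (real q + 1)\<^sup>2)"
    by (intro sum.cong) (auto simp: fcodeg_even_B[OF assms])
  also have "\<dots> = real t / (2 * real t + 1)\<^sup>2"
    using assms by simp
  finally have B: "(\<Sum>k=1..t. 1 / (fcodeg q (B k))\<^sup>2) \<le> 1/8"
    using ratio_sq_le_one_eighth[of "real t"] by simp
  have C1: "1 / (fcodeg q C1)\<^sup>2 \<le> 1/2\<^sup>2"
    unfolding fcodeg_even_C1[OF assms] using assms by (intro inverse_sq_le_inverse_sq) auto
  show ?thesis
    unfolding sum_fcols_even[OF assms] using A B C1 by simp
qed

lemma sum_inverse_fcodeg_sq_3mod4_le: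
  assumes "q = 4*u+3"
  shows "(\<Sum>s\<in>fcols q - {C0}. 1 / (fcodeg q s)\<^sup>2) \<le> 1/2"
proof -
  have "(\<Sum>k=1..u. 1 / (fcodeg q (A k))\<^sup>2) = (\<Sum>k=1..u. 1 / ((real q - 1) / 2)\<^sup>2)"
    by (intro sum.cong) (auto simp: fcodeg_3mod4_A[OF assms])
  also have "\<dots> = real u / (2 * real u + 1)\<^sup>2"
    using assms by simp
  finally have A: "(\<Sum>k=1..u. 1 / (fcodeg q (A k))\<^sup>2) \<le> 1/8"
    using ratio_sq_le_one_eighth[of "real u"] by simp
  have "(\<Sum>k=1..u. 1 / (fcodeg q (B k))\<^sup>2) = (\<Sum>k=1..u. 1 / ((real q + 1) / 2)\<^sup>2)"
    by (intro sum.cong) (auto simp: fcodeg_3mod4_B[OF assms])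
  also have "\<dots> = real u / (2 * real u + 2)\<^sup>2"
    using assms by simp
  finally have B: "(\<Sum>k=1..u. 1 / (fcodeg q (B k))\<^sup>2) \<le> 1/16"
    using ratio_sq_le_one_sixteenth[of "real u"] by simp
  have D: "1 / (fcodeg q (D k))\<^sup>2 \<le> 1/3\<^sup>2" if "k \<in> {1,2}" for k
    unfolding fcodeg_3mod4_D[OF assms that] using assms by (intro inverse_sq_le_inverse_sq) auto
  have E: "1 / (fcodeg q E)\<^sup>2 \<le> 1/4\<^sup>2"
    unfolding fcodeg_3mod4_E[OF assms] using assms by (intro inverse_sq_le_inverse_sq) auto
  show ?thesis
    unfolding sum_fcols_3mod4[OF assms] using A B D[of 1] D[of 2] E by simp
qed

lemma sum_inverse_fcodeg_sq_1mod4_le: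
  assumes "q = 4*u+1" "1 \<le> u"
  shows "(\<Sum>s\<in>fcols q - {C0}. 1 / (fcodeg q s)\<^sup>2) \<le> 1/2"
proof -
  have "(\<Sum>k=1..u-1. 1 / (fcodeg q (A k))\<^sup>2) = (\<Sum>k=1..u-1. 1 / ((real q - 1) / 2)\<^sup>2)"
    by (intro sum.cong) (auto simp: fcodeg_1mod4_A[OF assms(1)])
  also have "\<dots> = (real u - 1) / (2 * (real u - 1) + 2)\<^sup>2"
    using assms by (simp add: of_nat_diff algebra_simps)
  finally have A: "(\<Sum>k=1..u-1. 1 / (fcodeg q (A k))\<^sup>2) \<le> 1/16"
    using ratio_sq_le_one_sixteenth[of "real u - 1"] assms by simp
  have "(\<Sum>k=1..u. 1 / (fcodeg q (B k))\<^sup>2) = (\<Sum>k=1..u. 1 / ((real q + 1) / 2)\<^sup>2)"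
    by (intro sum.cong) (auto simp: fcodeg_1mod4_B[OF assms(1)])
  also have "\<dots> = real u / (2 * real u + 1)\<^sup>2"
    using assms by simp
  finally have B: "(\<Sum>k=1..u. 1 / (fcodeg q (B k))\<^sup>2) \<le> 1/8"
    using ratio_sq_le_one_eighth[of "real u"] by simp
  have D: "1 / (fcodeg q (D k))\<^sup>2 \<le> 1/5\<^sup>2" if "k \<in> {1,2}" for k
    unfolding fcodeg_1mod4_D[OF assms that] using assms by (intro inverse_sq_le_inverse_sq) auto
  have E: "1 / (fcodeg q E)\<^sup>2 \<le> 1/4\<^sup>2"
    unfolding fcodeg_1mod4_E[OF assms] using assms by (intro inverse_sq_le_inverse_sq) auto
  show ?thesis
    unfolding sum_fcols_1mod4[OF assms] using A B D[of 1] D[of 2] E by simp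
qed

lemma sum_inverse_fcodeg_sq_le:
  assumes "2 \<le> q"
  shows "(\<Sum>s\<in>fcols q - {C0}. 1 / (fcodeg q s)\<^sup>2) \<le> 1/2"
proof (cases "even q")
  case True
  then obtain t where "q = 2*t" by (auto elim: evenE)
  then show ?thesis using assms by (intro sum_inverse_fcodeg_sq_even_le) auto
next
  case False
  then have "q mod 4 = 1 \<or> q mod 4 = 3" by presburger
  then show ?thesis
  proof
    assume "q mod 4 = 1"
    then have "q = 4 * (q div 4) + 1" "1 \<le> q div 4" using assms by presburger+
    then show ?thesis by (rule sum_inverse_fcodeg_sq_1mod4_le)
  next
    assume "q mod 4 = 3"
    then have "q = 4 * (q div 4) + 3" by presburger
    then show ?thesis by (rule sum_inverse_fcodeg_sq_3mod4_le)
  qed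
qed

theorem proposition7p5:
  fixes q :: nat
  assumes "2 \<le> q"
  shows "2 * (\<Sum>s\<in>fcols q. 1 / (fcodeg q s)^2) \<le> 1 + 1 / fcodeg q C0"
proof -
  define c where "c = fcodeg q C0"
  have "(2::real)\<^sup>2 \<le> real q ^ 2" using assms by (intro power_mono) auto
  then have "2 \<le> c" unfolding c_def using fcodeg_C0_ge[of q] by simp
  then have "2 / c\<^sup>2 \<le> 1 / c" by (simp add: power2_eq_square field_simps)
  have "finite (fcols q)" "C0 \<in> fcols q" by (auto simp: fcols_def)
  then have "(\<Sum>s\<in>fcols q. 1 / (fcodeg q s)^2) = 1 / c\<^sup>2 + (\<Sum>s\<in>fcols q - {C0}. 1 / (fcodeg q s)\<^sup>2)"
    unfolding c_def by (rule sum.remove)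
  then show ?thesis
    using sum_inverse_fcodeg_sq_le[OF assms] \<open>2 / c\<^sup>2 \<le> 1 / c\<close> unfolding c_def by simp
qed

end
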